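(* Let $\pi\in[n]^m$ be a picking sequence for chores and let $i\ne j$ be two pickers. If in every suffix of $\pi$ picker $j$ has at least as many rounds as picker $i$, then a risk averse picker $i$ with any additive disvaluation $c_i$ does not envy picker $j$, not even ex-post: for any disvaluations and strategies of the other agents, when $i$ picks greedily, $c_i(B_i)\le c_i(B_j)$. Conversely, if this suffix condition fails, then there is an additive disvaluation $c_i$ for picker $i$ under which $i$ envies $j$, i.e. $\sum_{r\in R_i}c_i(e_{m-r+1})>\sum_{r\in R_j}c_i(e_{m-r+1})$, where $R_i,R_j$ are the rounds of $i$ and $j$ in $\pi$ and the chores are ordered so that $c_i(e_1)\ge\cdots\ge c_i(e_m)$.
   Context: In round $r$ of the picking sequence, picker $\pi_r$ takes one remaining chore. A risk averse agent uses the greedy picking strategy (take a remaining chore of smallest own disvalue); the disvalue such an agent can guarantee from a set $R$ of rounds is $\sum_{r\in R}c_i(e_{m-r+1})$ with chores sorted by non-increasing $c_i$. $B_i,B_j$ denote the final bundles of $i$ and $j$. *)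

theory Defs
  imports Complex_Main
begin

text \<open>A picking sequence is a list of agents (natural numbers < n) of length m.
Rounds are 0-based list positions here (paper round r corresponds to index r-1).
Chores are the natural numbers 0..<m.\<close>

definition suffix_cond :: "nat list \<Rightarrow> nat \<Rightarrow> nat \<Rightarrow> bool" where
  "suffix_cond \<pi> i j \<longleftrightarrow>
     (\<forall>k \<le> length \<pi>. count_list (drop k \<pi>) i \<le> count_list (drop k \<pi>) j)"

text \<open>A complete run of the picking sequence: ps!r is the chore taken in round r.
Agent i picks greedily (a remaining chore of smallest disvalue c); all other agents'
picks are arbitrary (this covers every disvaluation and strategy of the other agents).\<close>
definition greedy_run :: "nat list \<Rightarrow> nat \<Rightarrow> (nat \<Rightarrow> real) \<Rightarrow> nat list \<Rightarrow> bool" where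
  "greedy_run \<pi> i c ps \<longleftrightarrow>
     length ps = length \<pi> \<and> distinct ps \<and> set ps = {0..<length \<pi>} \<and>
     (\<forall>r < length \<pi>. \<pi> ! r = i \<longrightarrow>
        (\<forall>x \<in> {0..<length \<pi>} - set (take r ps). c (ps ! r) \<le> c x))"

definition final_bundle :: "nat list \<Rightarrow> nat list \<Rightarrow> nat \<Rightarrow> nat set" where
  "final_bundle \<pi> ps a = {ps ! r | r. r < length \<pi> \<and> \<pi> ! r = a}"

definition sorted_enum :: "(nat \<Rightarrow> real) \<Rightarrow> nat \<Rightarrow> (nat \<Rightarrow> nat) \<Rightarrow> bool" where
  "sorted_enum c m e \<longleftrightarrow> bij_betw e {1..m} {0..<m} \<and>
     (\<forall>a b. 1 \<le> a \<longrightarrow> a \<le> b \<longrightarrow> b \<le> m \<longrightarrow> c (e b) \<le> c (e a))"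

definition guarantee :: "nat list \<Rightarrow> (nat \<Rightarrow> real) \<Rightarrow> (nat \<Rightarrow> nat) \<Rightarrow> nat \<Rightarrow> real" where
  "guarantee \<pi> c e a = (\<Sum>r \<in> {r \<in> {1..length \<pi>}. \<pi> ! (r - 1) = a}. c (e (length \<pi> - r + 1)))"

end

theory Submission
  imports Defs
begin

text \<open>Let \<open>a r\<close> be the disvalue (for \<open>i\<close>) of the chore taken in round \<open>r\<close> and \<open>m r\<close> the
minimum of \<open>a\<close> over the rounds \<open>\<ge> r\<close>, i.e. over the chores still available in round \<open>r\<close>.
Greedy picking means \<open>a = m\<close> on the rounds of \<open>i\<close>, and \<open>m \<le> a\<close> everywhere. Since \<open>m\<close> is
nonnegative and nondecreasing, it is a nonnegative combination of indicators of suffixes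
of rounds, so the suffix condition gives \<open>\<Sum>\<^sub>R\<^sub>i m \<le> \<Sum>\<^sub>R\<^sub>j m\<close>.
Conversely, if \<open>j\<close> has fewer rounds than \<open>i\<close> in the last \<open>p\<close> rounds, let \<open>c\<close> be the
indicator of \<open>p\<close> chores: every sorted enumeration lists them first, so the guarantee
from a set of rounds counts its rounds among the last \<open>p\<close>.\<close>

definition rounds :: "'a list \<Rightarrow> 'a \<Rightarrow> nat set" where
  "rounds xs a = {r. r < length xs \<and> xs ! r = a}"

lemma finite_rounds [simp]: "finite (rounds xs a)"
  by (simp add: rounds_def)

lemma card_rounds: "card (rounds xs a) = count_list xs a"
  by (simp add: rounds_def count_list_eq_length_filter length_filter_conv_card eq_commute)

lemma rounds_Cons:
  "rounds (x # xs) a = (if x = a then {0} else {}) \<union> Suc ` rounds xs a"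
proof (intro set_eqI iffI)
  fix r assume "r \<in> rounds (x # xs) a"
  then show "r \<in> (if x = a then {0} else {}) \<union> Suc ` rounds xs a"
    by (cases r) (auto simp: rounds_def)
qed (auto simp: rounds_def split: if_splits)

lemma sum_rounds_Cons:
  "sum w (rounds (x # xs) a) = (if x = a then w 0 else 0) + sum (w \<circ> Suc) (rounds xs a)"
  unfolding rounds_Cons by (auto simp: sum.reindex sum.union_disjoint)

lemma rounds_drop: "(+) k ` rounds (drop k xs) a = {r \<in> rounds xs a. k \<le> r}"
proof (intro set_eqI iffI)
  fix r assume "r \<in> {r \<in> rounds xs a. k \<le> r}"
  then show "r \<in> (+) k ` rounds (drop k xs) a"
    by (intro image_eqI[of _ _ "r - k"]) (auto simp: rounds_def)
qed (auto simp: rounds_def)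

lemma card_rounds_from: "card {r \<in> rounds xs a. k \<le> r} = count_list (drop k xs) a"
  by (simp flip: rounds_drop card_rounds add: card_image)

lemma suffix_cond_Cons:
  assumes "suffix_cond (x # xs) i j"
  shows "suffix_cond xs i j" and "count_list (x # xs) i \<le> count_list (x # xs) j"
proof -
  show "suffix_cond xs i j"
    using assms unfolding suffix_cond_def by (metis Suc_le_mono drop_Suc_Cons length_Cons)
  show "count_list (x # xs) i \<le> count_list (x # xs) j"
    using assms unfolding suffix_cond_def by (metis drop0 le0)
qed

lemma sum_rounds_mono_weights:
  fixes w :: "nat \<Rightarrow> 'b::linordered_idom"
  assumes "suffix_cond xs i j"
    and "\<And>r. r < length xs \<Longrightarrow> 0 \<le> w r"
    and "\<And>r s. r \<le> s \<Longrightarrow> s < length xs \<Longrightarrow> w r \<le> w s"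
  shows "sum w (rounds xs i) \<le> sum w (rounds xs j)"
  using assms
proof (induction xs arbitrary: w)
  case Nil
  then show ?case by (simp add: rounds_def)
next
  case (Cons x xs)
  note suffix = suffix_cond_Cons[OF Cons.prems(1)]
  define v where "v = (\<lambda>r. w (Suc r) - w 0)"
  \<comment> \<open>Split off the constant part \<open>w 0\<close>; what remains vanishes in round \<open>0\<close>.\<close>
  have split: "sum w (rounds (x # xs) a) = w 0 * of_nat (count_list (x # xs) a) + sum v (rounds xs a)"
    for a
  proof -
    have "sum w (rounds (x # xs) a)
        = w 0 * of_nat (count_list (x # xs) a) + sum (\<lambda>r. w r - w 0) (rounds (x # xs) a)"
      by (simp add: sum_subtractf card_rounds[symmetric])
    also have "sum (\<lambda>r. w r - w 0) (rounds (x # xs) a) = sum v (rounds xs a)"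
      by (simp add: sum_rounds_Cons v_def comp_def)
    finally show ?thesis .
  qed
  have "sum v (rounds xs i) \<le> sum v (rounds xs j)"
    by (rule Cons.IH[OF suffix(1)]) (use Cons.prems(3) in \<open>auto simp: v_def\<close>)
  moreover have "w 0 * of_nat (count_list (x # xs) i) \<le> w 0 * of_nat (count_list (x # xs) j)"
    using suffix(2) Cons.prems(2)[of 0] by (simp add: mult_left_mono)
  ultimately show ?case by (simp add: split)
qed

lemma sum_rounds_suffix_min:
  fixes a :: "nat \<Rightarrow> 'b::linordered_idom"
  assumes "suffix_cond xs i j"
    and "\<And>r. 0 \<le> a r"
    and suffix_min: "\<And>r s. r \<in> rounds xs i \<Longrightarrow> r \<le> s \<Longrightarrow> s < length xs \<Longrightarrow> a r \<le> a s"
  shows "sum a (rounds xs i) \<le> sum a (rounds xs j)"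
proof -
  define m where "m r = Min (a ` {r..<length xs})" for r
  have "sum a (rounds xs i) \<le> sum m (rounds xs i)"
    by (rule sum_mono) (auto simp: m_def rounds_def suffix_min)
  also have "\<dots> \<le> sum m (rounds xs j)"
    by (rule sum_rounds_mono_weights[OF assms(1)]) (auto simp: m_def assms(2) intro!: Min_antimono)
  also have "\<dots> \<le> sum a (rounds xs j)"
    by (rule sum_mono) (auto simp: m_def rounds_def)
  finally show ?thesis .
qed

lemma sum_final_bundle:
  assumes "distinct ps" and "length ps = length \<pi>"
  shows "sum c (final_bundle \<pi> ps a) = (\<Sum>r\<in>rounds \<pi> a. c (ps ! r))"
proof -
  have "final_bundle \<pi> ps a = (!) ps ` rounds \<pi> a"
    unfolding final_bundle_def rounds_def by auto
  moreover have "inj_on ((!) ps) (rounds \<pi> a)"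
    using assms by (intro inj_on_nth) (auto simp: rounds_def)
  ultimately show ?thesis by (simp add: sum.reindex)
qed

lemma greedy_run_picks_cheapest:
  assumes "greedy_run \<pi> i c ps" and "r \<in> rounds \<pi> i" and "r \<le> s" and "s < length \<pi>"
  shows "c (ps ! r) \<le> c (ps ! s)"
proof -
  have "length ps = length \<pi>" and "distinct ps"
    using assms(1) by (auto simp: greedy_run_def)
  then have "ps ! s \<notin> set (take r ps)"
    using assms(3,4) by (auto simp: in_set_conv_nth nth_eq_iff_index_eq)
  moreover have "ps ! s \<in> {0..<length \<pi>}"
    using assms(1,4) nth_mem[of s ps] by (auto simp: greedy_run_def)
  ultimately show ?thesis
    using assms(1,2) by (auto simp: greedy_run_def rounds_def)
qed

lemma greedy_run_no_envy:
  assumes "suffix_cond \<pi> i j" and "\<And>x. 0 \<le> c x" and run: "greedy_run \<pi> i c ps"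
  shows "sum c (final_bundle \<pi> ps i) \<le> sum c (final_bundle \<pi> ps j)"
proof -
  have bundle_cost: "sum c (final_bundle \<pi> ps a) = (\<Sum>r\<in>rounds \<pi> a. c (ps ! r))" for a
    using run by (intro sum_final_bundle) (auto simp: greedy_run_def)
  show ?thesis
    unfolding bundle_cost by (rule sum_rounds_suffix_min[OF assms(1)])
      (use assms(2) greedy_run_picks_cheapest[OF run] in auto)
qed

lemma sorted_enum_indicator:
  assumes enum: "sorted_enum (\<lambda>x. of_bool (x \<in> P)) L e" and "P \<subseteq> {0..<L}"
    and b: "1 \<le> b" "b \<le> L"
  shows "e b \<in> P \<longleftrightarrow> b \<le> card P"
proof -
  have bij: "bij_betw e {1..L} {0..<L}"
    and sorted: "\<And>a b. 1 \<le> a \<Longrightarrow> a \<le> b \<Longrightarrow> b \<le> L \<Longrightarrow> e b \<in> P \<Longrightarrow> e a \<in> P"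
    using enum unfolding sorted_enum_def by (auto simp: of_bool_def split: if_splits)
  have inj: "inj_on e {1..L}"
    using bij by (rule bij_betw_imp_inj_on)
  show ?thesis
  proof
    assume "e b \<in> P"
    then have "e ` {1..b} \<subseteq> P"
      using sorted b(2) by auto
    moreover have "finite P"
      using assms(2) finite_subset by blast
    ultimately have "card (e ` {1..b}) \<le> card P"
      by (simp add: card_mono)
    moreover have "inj_on e {1..b}"
      using inj by (rule inj_on_subset) (use b(2) in auto)
    ultimately show "b \<le> card P"
      by (simp add: card_image)
  next
    assume "b \<le> card P"
    show "e b \<in> P"
    proof (rule ccontr)
      assume "e b \<notin> P"
      have "P \<subseteq> e ` {1..<b}"
      proof
        fix y assume "y \<in> P"
        then have "y \<in> e ` {1..L}"
          using assms(2) bij_betw_imp_surj_on[OF bij] by blast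
        then obtain b' where "b' \<in> {1..L}" "e b' = y"
          by blast
        moreover have "b' < b"
          using sorted[of b b'] b \<open>b' \<in> {1..L}\<close> \<open>e b' = y\<close> \<open>y \<in> P\<close> \<open>e b \<notin> P\<close>
          by (meson atLeastAtMost_iff not_le order.strict_implies_order)
        ultimately show "y \<in> e ` {1..<b}"
          by auto
      qed
      then have "card P \<le> card (e ` {1..<b})"
        by (simp add: card_mono)
      also have "\<dots> \<le> card {1..<b}"
        by (rule card_image_le) simp
      finally have "card P \<le> card {1..<b}" .
      with \<open>b \<le> card P\<close> b show False by simp
    qed
  qed
qed

lemma guarantee_eq_sum_rounds:
  "guarantee \<pi> c e a = (\<Sum>r\<in>rounds \<pi> a. c (e (length \<pi> - r)))"
proof -
  have "{r \<in> {1..length \<pi>}. \<pi> ! (r - 1) = a} = Suc ` rounds \<pi> a"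
    unfolding rounds_def by (auto intro!: image_eqI[where x = "r - 1" for r])
  moreover have "length \<pi> - Suc r + 1 = length \<pi> - r" if "r \<in> rounds \<pi> a" for r
    using that by (simp add: rounds_def Suc_diff_Suc)
  ultimately show ?thesis
    unfolding guarantee_def by (simp add: sum.reindex)
qed

lemma guarantee_indicator_last_chores:
  assumes "sorted_enum (\<lambda>x. of_bool (x < p)) (length \<pi>) e" and "p \<le> length \<pi>"
  shows "guarantee \<pi> (\<lambda>x. of_bool (x < p)) e a = count_list (drop (length \<pi> - p) \<pi>) a"
proof -
  have "e (length \<pi> - r) < p \<longleftrightarrow> length \<pi> - p \<le> r" if "r \<in> rounds \<pi> a" for r
  proof -
    have "1 \<le> length \<pi> - r"
      using that by (auto simp: rounds_def)
    then have "e (length \<pi> - r) < p \<longleftrightarrow> length \<pi> - r \<le> p"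
      using sorted_enum_indicator[of "{0..<p}" "length \<pi>" e "length \<pi> - r"] assms by simp
    then show ?thesis
      using that assms(2) by (auto simp: rounds_def)
  qed
  then have "guarantee \<pi> (\<lambda>x. of_bool (x < p)) e a
      = (\<Sum>r\<in>rounds \<pi> a. of_bool (length \<pi> - p \<le> r))"
    by (simp add: guarantee_eq_sum_rounds)
  also have "\<dots> = card {r \<in> rounds \<pi> a. length \<pi> - p \<le> r}"
    by (simp add: of_bool_def flip: sum.inter_filter)
  finally show ?thesis
    by (simp add: card_rounds_from)
qed

lemma envy_if_not_suffix_cond:
  assumes "\<not> suffix_cond \<pi> i j"
  shows "\<exists>c :: nat \<Rightarrow> real. (\<forall>x. 0 \<le> c x) \<and>
           (\<forall>e. sorted_enum c (length \<pi>) e \<longrightarrow> guarantee \<pi> c e i > guarantee \<pi> c e j)"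
proof -
  obtain k where k: "k \<le> length \<pi>" "count_list (drop k \<pi>) j < count_list (drop k \<pi>) i"
    using assms unfolding suffix_cond_def by (auto simp: not_le)
  define p where "p = length \<pi> - k"
  have "k = length \<pi> - p" and "p \<le> length \<pi>"
    using k(1) by (auto simp: p_def)
  then have "guarantee \<pi> (\<lambda>x. of_bool (x < p)) e i > guarantee \<pi> (\<lambda>x. of_bool (x < p)) e j"
    if "sorted_enum (\<lambda>x. of_bool (x < p)) (length \<pi>) e" for e
    using guarantee_indicator_last_chores[OF that] k(2) by simp
  then show ?thesis
    by (intro exI[of _ "\<lambda>x. of_bool (x < p)"]) auto
qed

theorem proposition6:
  fixes \<pi> :: "nat list" and n i j :: nat
  assumes "set \<pi> \<subseteq> {0..<n}" and "i < n" and "j < n" and "i \<noteq> j"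
  shows "(suffix_cond \<pi> i j \<longrightarrow>
            (\<forall>c :: nat \<Rightarrow> real. (\<forall>x. 0 \<le> c x) \<longrightarrow>
               (\<forall>ps. greedy_run \<pi> i c ps \<longrightarrow>
                  sum c (final_bundle \<pi> ps i) \<le> sum c (final_bundle \<pi> ps j))))
       \<and> (\<not> suffix_cond \<pi> i j \<longrightarrow>
            (\<exists>c :: nat \<Rightarrow> real. (\<forall>x. 0 \<le> c x) \<and>
               (\<forall>e. sorted_enum c (length \<pi>) e \<longrightarrow>
                  guarantee \<pi> c e i > guarantee \<pi> c e j)))"
  using greedy_run_no_envy envy_if_not_suffix_cond by blast

end
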